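(* Let $G_n$ be the de Bruijn graph of span $n$ defined in the context. Let $r$ be any vertex of $G_n$, and for each vertex $v\neq r$ of $G_n$ let $e_v$ be any arc of $G_n$ with tail $v$. Let $H$ be the spanning subgraph of $G_n$ whose arc set is $\{e_v : v\in V(G_n)\setminus\{r\}\}$. Let $W$ be a walk in $G_n$ starting at $r$ which avoids $H$. Let $v$ be a vertex of $G_n$ which is not on a directed cycle of $H$ and which is exhausted by $W$, and let $W_v$ be the initial subwalk of $W$ starting at $r$ and finishing at the moment it exhausts $v$. Then every vertex $u$ of $H_v$ is exhausted by $W_v$.
   Context: Let $A$ be a finite alphabet with a linear order $<$. Let $\mathcal{F}$ be a set of words over $A$ (forbidden words). A word $w$ is said to be in the language if the bi-infinite periodic sequence $\cdots www\cdots$ contains no element of $\mathcal{F}$ as a factor (contiguous subword). For $k\ge 1$, $W_k$ denotes the set of words of length $k$ in the language. Fix $n\geq 1$ and consider the directed graph whose vertex set is $A^n$ and whose arcs are the pairs $(as,sb)$ with $a,b\in A$, $s\in A^{n-1}$ and $asb\in W_{n+1}$; the label of the arc $(as,sb)$ is $b$. The de Bruijn graph of span $n$, $G_n$, is a strongly connected component of maximum size of this digraph. Vertices are identified with their words. A walk $W$ in $G_n$ starting at $r$ avoids $H$ if it is constructed as follows: start at $r$; if the current walk is $v_0e_0\cdots v_i$ and there is an arc with tail $v_i$ not in $H$ that has not yet been used by the walk, extend the walk by one such arc; otherwise, if the arc $e_{v_i}$ (when defined) has not yet been used, extend the walk by $e_{v_i}$; otherwise stop. A walk exhausts a vertex $x$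 if it uses every arc of $G_n$ having $x$ as head or as tail. For a vertex $v$ not lying on a directed cycle of $H$, $H_v$ denotes the subtree of $H$ converging to $v$, i.e. the set of vertices $u$ (including $v$) from which there is a directed path to $v$ using arcs of $H$. *)

theory Defs
  imports Main
begin

definition periodic_factor :: "'a list \<Rightarrow> 'a list \<Rightarrow> bool" where
  "periodic_factor f w \<longleftrightarrow>
     (\<exists>i::nat. f = map (\<lambda>j. w ! ((i + j) mod length w)) [0..<length f])"

text \<open>w is in the language: the bi-infinite periodic sequence ...www... contains no forbidden factor.\<close>
definition in_lang :: "'a list set \<Rightarrow> 'a list \<Rightarrow> bool" where
  "in_lang F w \<longleftrightarrow> w \<noteq> [] \<and> (\<forall>f\<in>F. \<not> periodic_factor f w)"

definition W_k :: "'a set \<Rightarrow> 'a list set \<Rightarrow> nat \<Rightarrow> 'a list set" where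
  "W_k A F k = {w. set w \<subseteq> A \<and> length w = k \<and> in_lang F w}"

definition words :: "'a set \<Rightarrow> nat \<Rightarrow> 'a list set" where
  "words A n = {w. set w \<subseteq> A \<and> length w = n}"

definition db_arcs :: "'a set \<Rightarrow> 'a list set \<Rightarrow> nat \<Rightarrow> ('a list \<times> 'a list) set" where
  "db_arcs A F n = {(a # s, s @ [b]) | a s b. a \<in> A \<and> b \<in> A \<and> set s \<subseteq> A \<and>
       length s = n - 1 \<and> a # s @ [b] \<in> W_k A F (Suc n)}"

definition is_scc :: "'v set \<Rightarrow> ('v \<times> 'v) set \<Rightarrow> 'v set \<Rightarrow> bool" where
  "is_scc V E C \<longleftrightarrow> C \<noteq> {} \<and> C \<subseteq> V \<and> (\<forall>x\<in>C. \<forall>y\<in>C. (x, y) \<in> E\<^sup>*) \<and>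
     (\<forall>D. C \<subseteq> D \<and> D \<subseteq> V \<and> (\<forall>x\<in>D. \<forall>y\<in>D. (x, y) \<in> E\<^sup>*) \<longrightarrow> D = C)"

text \<open>C is a vertex set of a de Bruijn graph G_n of span n: an SCC of maximum size.\<close>
definition is_dB_vertices :: "'a set \<Rightarrow> 'a list set \<Rightarrow> nat \<Rightarrow> 'a list set \<Rightarrow> bool" where
  "is_dB_vertices A F n C \<longleftrightarrow> is_scc (words A n) (db_arcs A F n) C \<and>
     (\<forall>D. is_scc (words A n) (db_arcs A F n) D \<longrightarrow> card D \<le> card C)"

definition dB_arcs :: "'a set \<Rightarrow> 'a list set \<Rightarrow> nat \<Rightarrow> 'a list set \<Rightarrow> ('a list \<times> 'a list) set" where
  "dB_arcs A F n C = {(x, y). x \<in> C \<and> y \<in> C \<and> (x, y) \<in> db_arcs A F n}"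

definition walk_arcs :: "'v list \<Rightarrow> ('v \<times> 'v) list" where
  "walk_arcs vs = zip vs (tl vs)"

definition exhausts :: "('v \<times> 'v) set \<Rightarrow> ('v \<times> 'v) set \<Rightarrow> 'v \<Rightarrow> bool" where
  "exhausts Ar U x \<longleftrightarrow> (\<forall>a\<in>Ar. (fst a = x \<or> snd a = x) \<longrightarrow> a \<in> U)"

text \<open>The walk vs in the graph with arc set Ar, starting at r, avoids H (arc set Hs, with
  e x the chosen arc out of x for x \<noteq> r), built until the construction stops.\<close>
definition avoids_walk ::
  "('v \<times> 'v) set \<Rightarrow> ('v \<times> 'v) set \<Rightarrow> ('v \<Rightarrow> 'v \<times> 'v) \<Rightarrow> 'v \<Rightarrow> 'v list \<Rightarrow> bool" where
  "avoids_walk Ar Hs e r vs \<longleftrightarrow> vs \<noteq> [] \<and> hd vs = r \<and>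
    (\<forall>i < length vs - 1.
       (let x = vs ! i; ei = (vs ! i, vs ! Suc i); used = set (take i (walk_arcs vs)) in
        ei \<in> Ar \<and> ei \<notin> used \<and>
        (if (\<exists>a\<in>Ar. fst a = x \<and> a \<notin> Hs \<and> a \<notin> used) then ei \<notin> Hs
         else (x \<noteq> r \<and> ei = e x)))) \<and>
    (let x = last vs; used = set (walk_arcs vs) in
       \<not> (\<exists>a\<in>Ar. fst a = x \<and> a \<notin> Hs \<and> a \<notin> used) \<and> (x = r \<or> e x \<in> used))"

end

theory Submission
  imports Defs
begin

(* A word a s b of length n + 1 lies in the language iff its rotation b a s does, since membership
   only depends on the periodic sequence ...www...; hence every vertex of the de Bruijn digraph
   has as many out-arcs as in-arcs. In a finite balanced digraph every arc lies on a cycle, so the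
   arcs at a vertex of a strongly connected component stay inside it, and G_n is balanced as well.

   An avoiding walk leaves a vertex u <> r along its H-arc e_u only when every other arc out of u
   has been used. So once e_u has been traversed, all out-arcs of u are used; as the walk started
   at r <> u and never repeats an arc, it has entered u at least as often as it left it, and by
   balance all in-arcs of u are used too. If u -> w is an arc of H and W_v exhausts w, then the
   in-arc e_u of w lies in W_v, so W_v exhausts u; induction along H-paths ending in v concludes. *)

definition out_arcs :: "('v \<times> 'v) set \<Rightarrow> 'v \<Rightarrow> ('v \<times> 'v) set" where
  "out_arcs E z = {a \<in> E. fst a = z}"

definition in_arcs :: "('v \<times> 'v) set \<Rightarrow> 'v \<Rightarrow> ('v \<times> 'v) set" where
  "in_arcs E z = {a \<in> E. snd a = z}"

lemma exhausts_iff: "exhausts E U x \<longleftrightarrow> out_arcs E x \<union> in_arcs E x \<subseteq> U"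
  unfolding exhausts_def out_arcs_def in_arcs_def by blast

lemma periodic_factor_rotate1:
  assumes "w \<noteq> []"
  shows "periodic_factor f (rotate1 w) \<longleftrightarrow> periodic_factor f w"
proof -
  define factor_at where "factor_at i = map (\<lambda>j. w ! ((i + j) mod length w)) [0..<length f]" for i
  have rotated: "map (\<lambda>j. rotate1 w ! ((i + j) mod length w)) [0..<length f] = factor_at (Suc i)"
    for i using assms by (simp add: factor_at_def nth_rotate1 mod_Suc_eq)
  have periodic: "factor_at (i + length w) = factor_at i" for i
  proof -
    have "(i + length w + j) mod length w = (i + j) mod length w" for j
      by (metis add.commute add.left_commute mod_add_self2)
    then show ?thesis by (simp add: factor_at_def)
  qed
  have "periodic_factor f (rotate1 w) \<longleftrightarrow> (\<exists>i. f = factor_at (Suc i))"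
    by (simp add: periodic_factor_def rotated)
  also have "\<dots> \<longleftrightarrow> (\<exists>i. f = factor_at i)"
  proof
    assume "\<exists>i. f = factor_at i"
    then obtain i where "f = factor_at i" by blast
    then have "f = factor_at (Suc (i + length w - 1))"
      using assms periodic[of i] by simp
    then show "\<exists>i. f = factor_at (Suc i)" by blast
  qed blast
  finally show ?thesis by (simp add: periodic_factor_def factor_at_def)
qed

lemma W_k_snoc_iff_Cons: "u @ [b] \<in> W_k A F m \<longleftrightarrow> b # u \<in> W_k A F m"
proof -
  have "in_lang F (b # u) \<longleftrightarrow> in_lang F (u @ [b])"
    using periodic_factor_rotate1[of "b # u"] by (simp add: in_lang_def)
  then show ?thesis by (auto simp: W_k_def)
qed

lemma db_arcs_eq: "db_arcs A F n = {(a # s, s @ [b]) | a s b. a # s @ [b] \<in> W_k A F (Suc n)}"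
  by (auto simp: db_arcs_def W_k_def)

lemma db_arcs_subset_words: "db_arcs A F n \<subseteq> words A n \<times> words A n"
  by (auto simp: db_arcs_eq W_k_def words_def)

lemma finite_words: "finite A \<Longrightarrow> finite (words A n)"
  unfolding words_def using finite_lists_length_eq by blast

lemma finite_db_arcs: "finite A \<Longrightarrow> finite (db_arcs A F n)"
  using db_arcs_subset_words finite_words by (metis finite_SigmaI finite_subset)

lemma out_arcs_db_arcs:
  assumes "u \<noteq> []"
  shows "out_arcs (db_arcs A F n) u = (\<lambda>b. (u, tl u @ [b])) ` {b. u @ [b] \<in> W_k A F (Suc n)}"
  using assms by (cases u) (auto simp: out_arcs_def db_arcs_eq)

lemma in_arcs_db_arcs:
  assumes "u \<noteq> []"
  shows "in_arcs (db_arcs A F n) u = (\<lambda>c. (c # butlast u, u)) ` {c. c # u \<in> W_k A F (Suc n)}"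
  using assms by (cases u rule: rev_cases) (auto simp: in_arcs_def db_arcs_eq)

lemma card_out_arcs_db_arcs_eq_in_arcs:
  "card (out_arcs (db_arcs A F n) u) = card (in_arcs (db_arcs A F n) u)"
proof (cases "u = []")
  case True
  then have "out_arcs (db_arcs A F n) u = {}" "in_arcs (db_arcs A F n) u = {}"
    by (auto simp: out_arcs_def in_arcs_def db_arcs_eq)
  then show ?thesis by simp
next
  case False
  have "card (out_arcs (db_arcs A F n) u) = card {b. u @ [b] \<in> W_k A F (Suc n)}"
    unfolding out_arcs_db_arcs[OF False] by (rule card_image) (auto simp: inj_on_def)
  also have "\<dots> = card {c. c # u \<in> W_k A F (Suc n)}"
    by (simp add: W_k_snoc_iff_Cons)
  also have "\<dots> = card (in_arcs (db_arcs A F n) u)"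
    unfolding in_arcs_db_arcs[OF False] by (rule card_image[symmetric]) (auto simp: inj_on_def)
  finally show ?thesis .
qed

lemma balanced_arc_on_cycle:
  assumes fin: "finite E" and bal: "\<And>z. card (out_arcs E z) = card (in_arcs E z)"
    and xy: "(x, y) \<in> E"
  shows "(y, x) \<in> E\<^sup>*"
proof (rule ccontr)
  assume not_back: "(y, x) \<notin> E\<^sup>*"
  define R where "R = {z. (y, z) \<in> E\<^sup>*}"
  have "R \<subseteq> insert y (snd ` E)"
    unfolding R_def by (auto elim: rtranclE simp: image_iff) (metis rtranclE snd_conv)
  then have finR: "finite R" using fin finite_subset by blast
  have "(\<Union>z\<in>R. out_arcs E z) \<subset> (\<Union>z\<in>R. in_arcs E z)"
  proof
    show "(\<Union>z\<in>R. out_arcs E z) \<subseteq> (\<Union>z\<in>R. in_arcs E z)"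
      unfolding R_def out_arcs_def in_arcs_def by auto
    have "(x, y) \<in> (\<Union>z\<in>R. in_arcs E z) - (\<Union>z\<in>R. out_arcs E z)"
      using xy not_back unfolding R_def out_arcs_def in_arcs_def by auto
    then show "(\<Union>z\<in>R. out_arcs E z) \<noteq> (\<Union>z\<in>R. in_arcs E z)" by blast
  qed
  moreover have "finite (\<Union>z\<in>R. in_arcs E z)"
    using fin by (rule finite_subset[rotated]) (auto simp: in_arcs_def)
  ultimately have "card (\<Union>z\<in>R. out_arcs E z) < card (\<Union>z\<in>R. in_arcs E z)"
    by (simp add: psubset_card_mono)
  moreover have "card (\<Union>z\<in>R. out_arcs E z) = (\<Sum>z\<in>R. card (out_arcs E z))"
    using finR fin by (intro card_UN_disjoint) (auto simp: out_arcs_def)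
  moreover have "card (\<Union>z\<in>R. in_arcs E z) = (\<Sum>z\<in>R. card (in_arcs E z))"
    using finR fin by (intro card_UN_disjoint) (auto simp: in_arcs_def)
  ultimately show False using bal by simp
qed

lemma is_scc_closed:
  assumes scc: "is_scc V E C" and "u \<in> C" "y \<in> V" "(u, y) \<in> E\<^sup>*" "(y, u) \<in> E\<^sup>*"
  shows "y \<in> C"
proof -
  have connected: "\<forall>x\<in>C. \<forall>z\<in>C. (x, z) \<in> E\<^sup>*" and "C \<subseteq> V"
    and maximal: "\<And>D. C \<subseteq> D \<Longrightarrow> D \<subseteq> V \<Longrightarrow> \<forall>x\<in>D. \<forall>z\<in>D. (x, z) \<in> E\<^sup>* \<Longrightarrow> D = C"
    using scc unfolding is_scc_def by blast+
  have "\<forall>x\<in>insert y C. \<forall>z\<in>insert y C. (x, z) \<in> E\<^sup>*"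
    using connected assms(2-5) by (auto intro: rtrancl_trans)
  then have "insert y C = C"
    using maximal \<open>C \<subseteq> V\<close> \<open>y \<in> V\<close> by blast
  then show ?thesis by blast
qed

lemma is_scc_arcs_restrict:
  assumes scc: "is_scc V E C" and "E \<subseteq> V \<times> V"
    and on_cycle: "\<And>x y. (x, y) \<in> E \<Longrightarrow> (y, x) \<in> E\<^sup>*" and "u \<in> C"
  shows "out_arcs (E \<inter> C \<times> C) u = out_arcs E u" "in_arcs (E \<inter> C \<times> C) u = in_arcs E u"
proof -
  have closed: "x \<in> C \<and> y \<in> C" if "(x, y) \<in> E" "x = u \<or> y = u" for x y
    using that is_scc_closed[OF scc \<open>u \<in> C\<close>] assms(2) on_cycle[OF that(1)]
    by auto
  show "out_arcs (E \<inter> C \<times> C) u = out_arcs E u" "in_arcs (E \<inter> C \<times> C) u = in_arcs E u"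
    unfolding out_arcs_def in_arcs_def using closed by auto
qed

lemma dB_arcs_eq: "dB_arcs A F n C = db_arcs A F n \<inter> C \<times> C"
  by (auto simp: dB_arcs_def)

lemma finite_dB_arcs: "finite A \<Longrightarrow> finite (dB_arcs A F n C)"
  by (simp add: dB_arcs_eq finite_db_arcs)

lemma card_out_arcs_dB_arcs_eq_in_arcs:
  assumes "finite A" "is_dB_vertices A F n C" "u \<in> C"
  shows "card (out_arcs (dB_arcs A F n C) u) = card (in_arcs (dB_arcs A F n C) u)"
proof -
  have "is_scc (words A n) (db_arcs A F n) C"
    using assms(2) unfolding is_dB_vertices_def by blast
  moreover have "(y, x) \<in> (db_arcs A F n)\<^sup>*" if "(x, y) \<in> db_arcs A F n" for x y
    using balanced_arc_on_cycle[OF finite_db_arcs[OF assms(1)] card_out_arcs_db_arcs_eq_in_arcs that] .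
  ultimately show ?thesis
    using is_scc_arcs_restrict[OF _ db_arcs_subset_words _ assms(3)]
      card_out_arcs_db_arcs_eq_in_arcs
    by (simp add: dB_arcs_eq)
qed

lemma length_walk_arcs [simp]: "length (walk_arcs vs) = length vs - 1"
  by (simp add: walk_arcs_def)

lemma nth_walk_arcs: "i < length (walk_arcs vs) \<Longrightarrow> walk_arcs vs ! i = (vs ! i, vs ! Suc i)"
  by (simp add: walk_arcs_def nth_tl)

lemma walk_arcs_take_Suc: "walk_arcs (take (Suc k) vs) = take k (walk_arcs vs)"
  by (rule nth_equalityI) (auto simp: nth_walk_arcs)

lemma card_out_arcs_walk_le_in_arcs:
  assumes "hd vs \<noteq> u" and "distinct (walk_arcs vs)"
  shows "card (out_arcs (set (walk_arcs vs)) u) \<le> card (in_arcs (set (walk_arcs vs)) u)"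
proof (cases "vs = []")
  case False
  have count: "card {a \<in> set (walk_arcs vs). f a = u} = count_list (map f (walk_arcs vs)) u"
    for f :: "'a \<times> 'a \<Rightarrow> 'a"
  proof -
    have "card {a \<in> set (walk_arcs vs). f a = u} = length (filter (\<lambda>a. f a = u) (walk_arcs vs))"
      using assms(2) by (metis distinct_card distinct_filter set_filter)
    then show ?thesis by (simp add: count_list_eq_length_filter comp_def eq_commute[of u])
  qed
  have "map fst (walk_arcs vs) = butlast vs" "map snd (walk_arcs vs) = tl vs"
    by (simp_all add: walk_arcs_def map_fst_zip_take map_snd_zip_take butlast_conv_take)
  then have "card (out_arcs (set (walk_arcs vs)) u) = count_list (butlast vs) u"
    and "card (in_arcs (set (walk_arcs vs)) u) = count_list (tl vs) u"
    using count[of fst] count[of snd] by (simp_all add: out_arcs_def in_arcs_def)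
  moreover have "count_list (butlast vs) u \<le> count_list vs u"
    using append_butlast_last_id[OF False] count_list_append by (metis le_add1)
  moreover have "count_list vs u = count_list (tl vs) u"
    using False assms(1) by (cases vs) auto
  ultimately show ?thesis by simp
qed (simp add: walk_arcs_def out_arcs_def in_arcs_def)

lemma avoids_walk_starts_at:
  assumes "avoids_walk Ar Hs e r vs"
  shows "vs \<noteq> []" "hd vs = r"
  using assms unfolding avoids_walk_def by blast+

lemma avoids_walk_step:
  assumes "avoids_walk Ar Hs e r vs" and "i < length (walk_arcs vs)"
  shows "walk_arcs vs ! i \<in> Ar" "walk_arcs vs ! i \<notin> set (take i (walk_arcs vs))"
    and "walk_arcs vs ! i \<in> Hs \<Longrightarrow>
      out_arcs Ar (fst (walk_arcs vs ! i)) - Hs \<subseteq> set (take i (walk_arcs vs))"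
  using assms unfolding avoids_walk_def
  by (auto simp: Let_def nth_walk_arcs out_arcs_def split: if_splits)

lemma avoids_walk_arcs_subset: "avoids_walk Ar Hs e r vs \<Longrightarrow> set (walk_arcs vs) \<subseteq> Ar"
  by (metis avoids_walk_step(1) in_set_conv_nth subsetI)

lemma avoids_walk_arcs_distinct:
  assumes "avoids_walk Ar Hs e r vs"
  shows "distinct (walk_arcs vs)"
proof -
  have "distinct (take i (walk_arcs vs))" if "i \<le> length (walk_arcs vs)" for i
    using that
  proof (induction i)
    case (Suc i)
    then show ?case
      using avoids_walk_step(2)[OF assms, of i] by (simp add: take_Suc_conv_app_nth)
  qed simp
  then show ?thesis by (metis order.refl take_all)
qed

lemma avoids_walk_exhausts_tail:
  assumes walk: "avoids_walk Ar Hs e r vs" and "finite Ar"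
    and balanced: "card (out_arcs Ar u) = card (in_arcs Ar u)"
    and "u \<noteq> r" and H_out: "out_arcs Hs u = {e u}"
    and used: "e u \<in> set (take k (walk_arcs vs))"
  shows "exhausts Ar (set (take k (walk_arcs vs))) u"
proof -
  define U where "U = set (take k (walk_arcs vs))"
  obtain j where j: "j < k" "j < length (walk_arcs vs)" "walk_arcs vs ! j = e u"
    using used by (auto simp: in_set_conv_nth)
  have "e u \<in> Hs" "fst (e u) = u"
    using H_out by (auto simp: out_arcs_def)
  then have "out_arcs Ar u - Hs \<subseteq> set (take j (walk_arcs vs))"
    using avoids_walk_step(3)[OF walk j(2)] j(3) by simp
  also have "\<dots> \<subseteq> U"
    using j(1) by (simp add: U_def set_take_subset_set_take)
  finally have "out_arcs Ar u - Hs \<subseteq> U" .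
  moreover have "out_arcs Ar u \<subseteq> (out_arcs Ar u - Hs) \<union> out_arcs Hs u"
    by (auto simp: out_arcs_def)
  ultimately have out: "out_arcs Ar u \<subseteq> U"
    using H_out used unfolding U_def by auto
  have U_sub: "U \<subseteq> Ar"
    unfolding U_def using avoids_walk_arcs_subset[OF walk] by (meson order_trans set_take_subset)
  have "hd (take (Suc k) vs) \<noteq> u"
    using avoids_walk_starts_at[OF walk] \<open>u \<noteq> r\<close> by simp
  moreover have "distinct (walk_arcs (take (Suc k) vs))"
    using avoids_walk_arcs_distinct[OF walk] by (simp add: walk_arcs_take_Suc)
  ultimately have "card (out_arcs U u) \<le> card (in_arcs U u)"
    unfolding U_def walk_arcs_take_Suc[symmetric] by (rule card_out_arcs_walk_le_in_arcs)
  moreover have "out_arcs U u = out_arcs Ar u"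
    using out U_sub by (auto simp: out_arcs_def)
  ultimately have "card (in_arcs Ar u) \<le> card (in_arcs U u)"
    using balanced by simp
  then have "in_arcs U u = in_arcs Ar u"
    using U_sub \<open>finite Ar\<close> by (intro card_seteq) (auto simp: in_arcs_def)
  then show ?thesis
    using out by (auto simp: U_def exhausts_iff in_arcs_def)
qed

lemma avoids_walk_exhausts_rtrancl:
  assumes walk: "avoids_walk Ar (e ` S) e r vs" and "finite Ar" and "r \<notin> S"
    and arcs: "\<And>x. x \<in> S \<Longrightarrow> e x \<in> Ar \<and> fst (e x) = x"
    and balanced: "\<And>x. x \<in> S \<Longrightarrow> card (out_arcs Ar x) = card (in_arcs Ar x)"
    and path: "(u, w) \<in> (e ` S)\<^sup>*"
    and exhausted: "exhausts Ar (set (take k (walk_arcs vs))) w"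
  shows "exhausts Ar (set (take k (walk_arcs vs))) u"
  using path exhausted
proof (induction rule: converse_rtrancl_induct)
  case (step u w')
  obtain x where x: "x \<in> S" "e x = (u, w')"
    using step.hyps(1) by (metis imageE)
  moreover from arcs[OF x(1)] x(2) have "x = u"
    by simp
  ultimately have u: "u \<in> S" "e u = (u, w')"
    by simp_all
  have H_out: "out_arcs (e ` S) u = {e u}"
  proof
    show "out_arcs (e ` S) u \<subseteq> {e u}"
      unfolding out_arcs_def using arcs by fastforce
    show "{e u} \<subseteq> out_arcs (e ` S) u"
      using step.hyps(1) u(2) by (simp add: out_arcs_def)
  qed
  have "e u \<in> in_arcs Ar w'"
    using arcs[OF u(1)] u(2) by (simp add: in_arcs_def)
  then have used: "e u \<in> set (take k (walk_arcs vs))"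
    using step.IH step.prems by (auto simp: exhausts_iff)
  have "u \<noteq> r"
    using u(1) \<open>r \<notin> S\<close> by blast
  then show ?case
    using avoids_walk_exhausts_tail[OF walk \<open>finite Ar\<close> balanced[OF u(1)] _ H_out used] by blast
qed

theorem lemma1:
  fixes A :: "'a::linorder set" and F :: "'a list set" and n :: nat
    and C :: "'a list set" and r :: "'a list" and e :: "'a list \<Rightarrow> 'a list \<times> 'a list"
    and vs :: "'a list list" and v :: "'a list"
  assumes "finite A" and "n \<ge> 1"
    and "is_dB_vertices A F n C"
    and "r \<in> C"
    and "\<forall>x\<in>C - {r}. e x \<in> dB_arcs A F n C \<and> fst (e x) = x"
    and "avoids_walk (dB_arcs A F n C) (e ` (C - {r})) e r vs"
    and "v \<in> C"
    and "(v, v) \<notin> (e ` (C - {r}))\<^sup>+"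
    and "exhausts (dB_arcs A F n C) (set (walk_arcs vs)) v"
  shows "\<forall>u \<in> {u. (u, v) \<in> (e ` (C - {r}))\<^sup>*}.
           exhausts (dB_arcs A F n C)
             (set (walk_arcs (take (Suc (LEAST k. k < length vs \<and>
                 exhausts (dB_arcs A F n C) (set (walk_arcs (take (Suc k) vs))) v)) vs))) u"
proof -
  define Ar where "Ar = dB_arcs A F n C"
  define k where "k = (LEAST k. k < length vs \<and> exhausts Ar (set (walk_arcs (take (Suc k) vs))) v)"
  have walk: "avoids_walk Ar (e ` (C - {r})) e r vs"
    using assms(6) by (simp add: Ar_def)
  have "length vs - 1 < length vs \<and>
      exhausts Ar (set (walk_arcs (take (Suc (length vs - 1)) vs))) v"
    using avoids_walk_starts_at(1)[OF walk] assms(9) by (simp add: Ar_def)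
  then have "k < length vs \<and> exhausts Ar (set (walk_arcs (take (Suc k) vs))) v"
    unfolding k_def by (rule LeastI)
  then have exhausted_v: "exhausts Ar (set (take k (walk_arcs vs))) v"
    by (simp add: walk_arcs_take_Suc)
  have "finite Ar"
    unfolding Ar_def using assms(1) by (rule finite_dB_arcs)
  have "exhausts Ar (set (take k (walk_arcs vs))) u" if "(u, v) \<in> (e ` (C - {r}))\<^sup>*" for u
  proof (rule avoids_walk_exhausts_rtrancl[OF walk \<open>finite Ar\<close> _ _ _ that exhausted_v])
    show "e x \<in> Ar \<and> fst (e x) = x" if "x \<in> C - {r}" for x
      using assms(5) that by (simp add: Ar_def)
    show "card (out_arcs Ar x) = card (in_arcs Ar x)" if "x \<in> C - {r}" for x
      using card_out_arcs_dB_arcs_eq_in_arcs[OF assms(1,3)] that by (simp add: Ar_def)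
  qed simp
  then show ?thesis
    by (simp add: Ar_def k_def walk_arcs_take_Suc)
qed

end
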